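(* Let $X\subset\mathbb{Z}^n$, let $1\le u\le n$, and let $d$ be an $\ell_p$ metric on $X$ for some $1\le p\le\infty$, so that $(X,d,c_u)$ is a digital metric space. Let $T:X\to X$ be a map such that for some $\alpha>0$, for all $x,y\in X$, $1\le d(x,y)<u^{1/p}+\alpha$ implies $d(T(x),T(y))<1$. If $X$ is $c_u$-connected, then $T$ is constant.
   Context: For distinct $p,q\in\mathbb{Z}^n$, $p$ and $q$ are $c_u$-adjacent if $|p_i-q_i|=1$ for at most $u$ indices $i$ and $p_j=q_j$ for all other indices $j$. $X$ is $c_u$-connected if the graph on $X$ with edges given by $c_u$-adjacency is connected. The $\ell_p$ metric is $d(x,y)=(\sum_i|x_i-y_i|^p)^{1/p}$ for $1\le p<\infty$ and $\max_i|x_i-y_i|$ for $p=\infty$ (with $u^{1/\infty}=1$). *)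

theory Defs
  imports "HOL-Analysis.Analysis"
begin

text \<open>Points of Z^n are vectors int^'n (n = CARD('n)). The exponent p of the
 l_p metric is an extended real with 1 \<le> p; p = \<infinity> gives the max metric.\<close>

definition lp_dist :: "ereal \<Rightarrow> int^'n \<Rightarrow> int^'n \<Rightarrow> real" where
  "lp_dist p x y =
     (if p = \<infinity> then Max (range (\<lambda>i. real_of_int \<bar>x$i - y$i\<bar>))
      else (\<Sum>i\<in>UNIV. real_of_int \<bar>x$i - y$i\<bar> powr real_of_ereal p) powr (1 / real_of_ereal p))"

definition root_p :: "ereal \<Rightarrow> nat \<Rightarrow> real" where
  "root_p p u = (if p = \<infinity> then 1 else real u powr (1 / real_of_ereal p))"

definition c_adj :: "nat \<Rightarrow> int^'n \<Rightarrow> int^'n \<Rightarrow> bool" where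
  "c_adj u p q \<longleftrightarrow> p \<noteq> q \<and> card {i. \<bar>p$i - q$i\<bar> = 1} \<le> u
      \<and> (\<forall>j. \<bar>p$j - q$j\<bar> \<noteq> 1 \<longrightarrow> p$j = q$j)"

definition c_connected :: "nat \<Rightarrow> (int^'n) set \<Rightarrow> bool" where
  "c_connected u X \<longleftrightarrow>
     (\<forall>x\<in>X. \<forall>y\<in>X. (\<lambda>a b. a \<in> X \<and> b \<in> X \<and> c_adj u a b)\<^sup>*\<^sup>* x y)"

end

theory Submission
  imports Defs
begin

text \<open>Distinct lattice points are at \<open>\<ell>\<^sub>p\<close> distance at least 1, while \<open>c\<^sub>u\<close>-adjacent
  points are at distance at most \<open>u\<^bsup>1/p\<^esup>\<close>. Hence the hypothesis on \<open>T\<close> applies to every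
  adjacent pair and puts their images at distance below 1, i.e. makes them equal; along
  \<open>c\<^sub>u\<close>-paths \<open>T\<close> is therefore constant.\<close>

lemma lp_dist_ge_1:
  fixes x y :: "int^'n"
  assumes "0 < p" "x \<noteq> y"
  shows "1 \<le> lp_dist p x y"
proof -
  obtain j where "x$j \<noteq> y$j" using assms(2) by (metis vec_eq_iff)
  then have dj: "1 \<le> real_of_int \<bar>x$j - y$j\<bar>" by linarith
  show ?thesis
  proof (cases "p = \<infinity>")
    case True
    have "real_of_int \<bar>x$j - y$j\<bar> \<le> Max (range (\<lambda>i. real_of_int \<bar>x$i - y$i\<bar>))"
      by (rule Max_ge) auto
    with True dj show ?thesis unfolding lp_dist_def by (simp only: if_True refl)
  next
    case False
    define q where "q = real_of_ereal p"
    have q: "0 < q" using assms(1) False unfolding q_def by (cases p) auto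
    have "1 \<le> real_of_int \<bar>x$j - y$j\<bar> powr q" using dj q by (simp add: ge_one_powr_ge_zero)
    also have "\<dots> \<le> (\<Sum>i\<in>UNIV. real_of_int \<bar>x$i - y$i\<bar> powr q)"
      by (rule member_le_sum) auto
    finally have "1 \<le> (\<Sum>i\<in>UNIV. real_of_int \<bar>x$i - y$i\<bar> powr q) powr (1/q)"
      using q by (simp add: ge_one_powr_ge_zero)
    with False show ?thesis by (simp add: lp_dist_def q_def)
  qed
qed

corollary lp_dist_less_1_imp_eq:
  fixes x y :: "int^'n"
  assumes "0 < p" "lp_dist p x y < 1"
  shows "x = y"
  using lp_dist_ge_1[OF assms(1)] assms(2) by force

lemma lp_dist_le_root_p_if_c_adj:
  fixes a b :: "int^'n"
  assumes "0 < p" "c_adj u a b"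
  shows "lp_dist p a b \<le> root_p p u"
proof -
  define S where "S = {i. \<bar>a$i - b$i\<bar> = 1}"
  have card_S: "card S \<le> u" and eq_off_S: "\<And>j. j \<notin> S \<Longrightarrow> a$j = b$j"
    using assms(2) unfolding c_adj_def S_def by auto
  have dist_S: "\<And>i. real_of_int \<bar>a$i - b$i\<bar> = (if i \<in> S then 1 else 0)"
    using eq_off_S unfolding S_def by auto
  show ?thesis
  proof (cases "p = \<infinity>")
    case True
    have "Max (range (\<lambda>i. real_of_int \<bar>a$i - b$i\<bar>)) \<le> 1"
      by (subst Max_le_iff) (auto simp del: of_int_abs of_int_diff simp add: dist_S)
    with True show ?thesis unfolding lp_dist_def root_p_def by (simp only: if_True refl)
  next
    case False
    define q where "q = real_of_ereal p"
    have q: "0 < q" using assms(1) False unfolding q_def by (cases p) auto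
    have "(\<Sum>i\<in>UNIV. real_of_int \<bar>a$i - b$i\<bar> powr q) = (\<Sum>i\<in>UNIV. if i \<in> S then 1 else 0)"
      by (rule sum.cong) (auto simp del: of_int_abs of_int_diff simp add: dist_S)
    also have "\<dots> = real (card S)" by (simp add: sum.If_cases)
    finally have sum_eq: "(\<Sum>i\<in>UNIV. real_of_int \<bar>a$i - b$i\<bar> powr q) = real (card S)" .
    have "real (card S) powr (1/q) \<le> real u powr (1/q)"
      using card_S q by (intro powr_mono2) auto
    with False sum_eq show ?thesis by (simp add: lp_dist_def root_p_def q_def)
  qed
qed

lemma c_connected_imp_constant:
  assumes "c_connected u X"
    and "\<And>a b. a \<in> X \<Longrightarrow> b \<in> X \<Longrightarrow> c_adj u a b \<Longrightarrow> f a = f b"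
  shows "\<exists>c. \<forall>x\<in>X. f x = c"
proof (cases "X = {}")
  case False
  then obtain x0 where "x0 \<in> X" by auto
  have "f y = f x0" if "y \<in> X" for y
  proof -
    have "(\<lambda>a b. a \<in> X \<and> b \<in> X \<and> c_adj u a b)\<^sup>*\<^sup>* x0 y"
      using assms(1) \<open>x0 \<in> X\<close> that unfolding c_connected_def by blast
    then show ?thesis by (induction rule: rtranclp_induct) (use assms(2) in auto)
  qed
  then show ?thesis by blast
qed simp

theorem proposition8p5:
  fixes X :: "(int^'n) set" and u :: nat and p :: ereal and T :: "int^'n \<Rightarrow> int^'n"
    and \<alpha> :: real
  assumes "1 \<le> u" "u \<le> CARD('n)" "1 \<le> p"
    and "\<forall>x\<in>X. T x \<in> X"
    and "\<alpha> > 0"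
    and "\<forall>x\<in>X. \<forall>y\<in>X. 1 \<le> lp_dist p x y \<and> lp_dist p x y < root_p p u + \<alpha>
            \<longrightarrow> lp_dist p (T x) (T y) < 1"
    and "c_connected u X"
  shows "\<exists>c. \<forall>x\<in>X. T x = c"
proof (rule c_connected_imp_constant[OF assms(7)])
  fix a b
  assume ab: "a \<in> X" "b \<in> X" "c_adj u a b"
  have p: "0 < p" using assms(3) by (cases p) auto
  have "1 \<le> lp_dist p a b"
    using ab(3) by (intro lp_dist_ge_1[OF p]) (simp add: c_adj_def)
  moreover have "lp_dist p a b < root_p p u + \<alpha>"
    using lp_dist_le_root_p_if_c_adj[OF p ab(3)] assms(5) by linarith
  ultimately have "lp_dist p (T a) (T b) < 1" using assms(6) ab by blast
  then show "T a = T b" by (rule lp_dist_less_1_imp_eq[OF p])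
qed

end
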